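(* For every real number $\alpha\ge 1$ there exist real numbers $\alpha_0\le\alpha<\alpha_1$ such that, with $I_\alpha=[\alpha_0,\alpha_1)$: for every $\beta\in I_\alpha$ the sequences $(P^\beta_i)_{i\ge0}$ and $(P^\alpha_i)_{i\ge0}$ are identical, and for every real $\beta\ge 1$ with $\beta\notin I_\alpha$ the two sequences are not identical, i.e.\ there is an index $i$ with $P^\alpha_i\neq P^\beta_i$.
   Context: For a real number $\alpha\ge 1$, define the integer sequence $(P^\alpha_i)_{i\ge 0}$ by $P^\alpha_0=0$, $P^\alpha_1=1$, and for $k\ge 1$, $P^\alpha_{k+1}=P^\alpha_k+P^\alpha_j$, where $j\ge1$ is the unique index with $\alpha P^\alpha_{j-1}<P^\alpha_k\le \alpha P^\alpha_j$. (By a theorem of Schwenk, the terms of this sequence are exactly the pile sizes $n$ for which the initial position of $\alpha$-\textsc{tag} is a second-player win, where $\alpha$-\textsc{tag} is the game: a single pile of $n$ stones; players alternately remove at least one stone; the first move removes at most $n-1$ stones; each later move removes at most $\alpha$ times the number removed on the previous move; the player unable to move loses.) *)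

theory Defs
  imports Complex_Main
begin

(* P_0 = 0, P_1 = 1, P_{k+1} = P_k + P_j where j >= 1 is the unique index with
   alpha * P_{j-1} < P_k <= alpha * P_j.  Such j necessarily satisfies j <= k (since
   alpha >= 1 gives P_k <= alpha * P_k), so the index is searched among already computed terms. *)
fun Ptag_list :: "real \<Rightarrow> nat \<Rightarrow> nat list" where
  "Ptag_list \<alpha> 0 = [0]"
| "Ptag_list \<alpha> (Suc 0) = [0, 1]"
| "Ptag_list \<alpha> (Suc (Suc k)) =
     (let xs = Ptag_list \<alpha> (Suc k); pk = xs ! Suc k;
          j = (THE j. 1 \<le> j \<and> j \<le> Suc k \<and>
                      \<alpha> * real (xs ! (j - 1)) < real pk \<and> real pk \<le> \<alpha> * real (xs ! j))
      in xs @ [pk + xs ! j])"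

definition Ptag :: "real \<Rightarrow> nat \<Rightarrow> nat" where
  "Ptag \<alpha> i = Ptag_list \<alpha> i ! i"

end

theory Submission
  imports Defs
begin

(*
  The sequence P^beta depends on beta only through the comparisons
  beta * P_(j-1) < P_k <= beta * P_j at the indices j = j(k) chosen for alpha.  Hence, for
  beta >= 1, P^beta = P^alpha exactly when beta lies in every interval
  [P_k / P_j(k), P_k / P_(j(k)-1)), i.e. when sup P_k / P_j(k) <= beta < inf P_k / P_(j(k)-1).
  The infimum stays strictly above every such beta: the lag k - j(k) is nondecreasing and
  bounded (P grows at least by the factor 1 + 1/beta per step, while P_k <= beta * P_j(k)),
  hence eventually a constant m.  From then on P and the slack P_k - beta * P_(j(k)-1) obey
  the same recurrence x_(k+1) = x_k + x_(k-m), so the slack stays above a fixed positive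
  fraction of P_k.
*)

lemma length_Ptag_list [simp]: "length (Ptag_list \<alpha> n) = Suc n"
  by (induction \<alpha> n rule: Ptag_list.induct) (auto simp: Let_def)

lemma Ptag_list_Suc: "Ptag_list \<alpha> (Suc n) = Ptag_list \<alpha> n @ [Ptag \<alpha> (Suc n)]"
proof -
  obtain v where v: "Ptag_list \<alpha> (Suc n) = Ptag_list \<alpha> n @ [v]"
    by (cases n) (auto simp: Let_def)
  then have "Ptag \<alpha> (Suc n) = v"
    by (simp add: Ptag_def nth_append)
  with v show ?thesis by simp
qed

lemma nth_Ptag_list: "i \<le> n \<Longrightarrow> Ptag_list \<alpha> n ! i = Ptag \<alpha> i"
proof (induction n)
  case 0
  then show ?case by (simp add: Ptag_def)
next
  case (Suc n)
  then show ?case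
    by (cases "i = Suc n") (simp_all add: Ptag_def, simp add: Ptag_list_Suc nth_append)
qed

lemma Ptag_0 [simp]: "Ptag \<alpha> 0 = 0"
  and Ptag_1 [simp]: "Ptag \<alpha> 1 = 1" "Ptag \<alpha> (Suc 0) = 1"
  by (simp_all add: Ptag_def)

definition Ptag_index :: "real \<Rightarrow> nat \<Rightarrow> nat" where
  "Ptag_index \<alpha> k = (THE j. 1 \<le> j \<and> j \<le> k \<and>
     \<alpha> * real (Ptag \<alpha> (j - 1)) < real (Ptag \<alpha> k) \<and> real (Ptag \<alpha> k) \<le> \<alpha> * real (Ptag \<alpha> j))"

lemma Ptag_Suc_Suc:
  "Ptag \<alpha> (Suc (Suc k)) = Ptag \<alpha> (Suc k) + Ptag_list \<alpha> (Suc k) ! Ptag_index \<alpha> (Suc k)"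
proof -
  let ?xs = "Ptag_list \<alpha> (Suc k)"
  have "(\<lambda>j. 1 \<le> j \<and> j \<le> Suc k \<and> \<alpha> * real (?xs ! (j - 1)) < real (?xs ! Suc k)
          \<and> real (?xs ! Suc k) \<le> \<alpha> * real (?xs ! j)) =
        (\<lambda>j. 1 \<le> j \<and> j \<le> Suc k \<and> \<alpha> * real (Ptag \<alpha> (j - 1)) < real (Ptag \<alpha> (Suc k))
          \<and> real (Ptag \<alpha> (Suc k)) \<le> \<alpha> * real (Ptag \<alpha> j))"
    by (auto simp: nth_Ptag_list)
  then have "Ptag_list \<alpha> (Suc (Suc k)) = ?xs @ [Ptag \<alpha> (Suc k) + ?xs ! Ptag_index \<alpha> (Suc k)]"
    by (simp only: Ptag_list.simps Let_def Ptag_index_def) (simp add: nth_Ptag_list)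
  then show ?thesis
    by (simp add: Ptag_def nth_append)
qed

(* Whatever index THE picks, each new term is the previous one plus a natural number; this
   monotonicity is all that the existence and uniqueness of the index require. *)
lemma mono_Ptag: "mono (Ptag \<alpha>)"
  unfolding mono_iff_le_Suc
proof
  show "Ptag \<alpha> k \<le> Ptag \<alpha> (Suc k)" for k
    by (cases k) (simp_all add: Ptag_Suc_Suc)
qed

lemma Ptag_pos: "1 \<le> k \<Longrightarrow> 0 < Ptag \<alpha> k"
  using monoD[OF mono_Ptag[of \<alpha>], of 1 k] by simp

lemma ex1_bracketing_index:
  fixes f :: "nat \<Rightarrow> nat" and c x :: real
  assumes "mono f" "f 0 = 0" "0 < x" "x \<le> c * f N"
  shows "\<exists>!j. 1 \<le> j \<and> j \<le> N \<and> c * f (j - 1) < x \<and> x \<le> c * f j"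
proof -
  have "0 < c * f N"
    using assms(3,4) by linarith
  then have "0 < c"
    by (simp add: zero_less_mult_iff)
  then have le: "c * f i \<le> c * f i'" if "i \<le> i'" for i i'
    using monoD[OF assms(1) that] by simp
  define j where "j = (LEAST j. x \<le> c * f j)"
  have j_ub: "x \<le> c * f j" and "j \<le> N"
    unfolding j_def using assms(4) by (auto intro: LeastI Least_le)
  moreover have "1 \<le> j"
    using j_ub assms(2,3) by (cases j) auto
  moreover have "c * f (j - 1) < x"
    using not_less_Least[of "j - 1" "\<lambda>j. x \<le> c * f j"] \<open>1 \<le> j\<close> by (simp add: j_def)
  moreover have "j' = j" if "1 \<le> j'" "c * f (j' - 1) < x" "x \<le> c * f j'" for j'
  proof (rule ccontr)
    assume "j' \<noteq> j"
    then have "j' \<le> j - 1 \<or> j \<le> j' - 1" by linarith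
    then show False
      using le[of j' "j - 1"] le[of j "j' - 1"] that \<open>c * f (j - 1) < x\<close> j_ub by auto
  qed
  ultimately show ?thesis by blast
qed

lemma ex1_Ptag_index:
  assumes "1 \<le> \<alpha>" "1 \<le> k"
  shows "\<exists>!j. 1 \<le> j \<and> j \<le> k \<and>
    \<alpha> * real (Ptag \<alpha> (j - 1)) < real (Ptag \<alpha> k) \<and> real (Ptag \<alpha> k) \<le> \<alpha> * real (Ptag \<alpha> j)"
proof (rule ex1_bracketing_index[OF mono_Ptag Ptag_0])
  show "0 < real (Ptag \<alpha> k)"
    using Ptag_pos[OF assms(2)] by simp
  show "real (Ptag \<alpha> k) \<le> \<alpha> * real (Ptag \<alpha> k)"
    using assms(1) by (simp add: mult_le_cancel_right1)
qed

lemma Ptag_index: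
  assumes "1 \<le> \<alpha>" "1 \<le> k"
  shows "1 \<le> Ptag_index \<alpha> k" "Ptag_index \<alpha> k \<le> k"
    and "\<alpha> * real (Ptag \<alpha> (Ptag_index \<alpha> k - 1)) < real (Ptag \<alpha> k)"
    and "real (Ptag \<alpha> k) \<le> \<alpha> * real (Ptag \<alpha> (Ptag_index \<alpha> k))"
  using theI'[OF ex1_Ptag_index[OF assms]] unfolding Ptag_index_def by blast+

lemma Ptag_index_unique:
  assumes "1 \<le> \<alpha>" "1 \<le> k" "1 \<le> j" "j \<le> k"
    and "\<alpha> * real (Ptag \<alpha> (j - 1)) < real (Ptag \<alpha> k)" "real (Ptag \<alpha> k) \<le> \<alpha> * real (Ptag \<alpha> j)"
  shows "Ptag_index \<alpha> k = j"
  unfolding Ptag_index_def using assms(3-) by (intro the1_equality[OF ex1_Ptag_index[OF assms(1,2)]]) simp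

lemma Ptag_Suc:
  assumes "1 \<le> \<alpha>" "1 \<le> k"
  shows "Ptag \<alpha> (Suc k) = Ptag \<alpha> k + Ptag \<alpha> (Ptag_index \<alpha> k)"
proof -
  obtain k' where "k = Suc k'"
    using assms(2) by (cases k) auto
  then show ?thesis
    using Ptag_index(2)[OF assms] by (simp add: Ptag_Suc_Suc nth_Ptag_list)
qed

lemma strict_mono_Ptag:
  assumes "1 \<le> \<alpha>"
  shows "strict_mono (Ptag \<alpha>)"
  unfolding strict_mono_Suc_iff
proof
  fix k
  show "Ptag \<alpha> k < Ptag \<alpha> (Suc k)"
  proof (cases "k = 0")
    case False
    then show ?thesis
      using Ptag_Suc[OF assms] Ptag_pos Ptag_index(1)[OF assms] by simp
  qed simp
qed

lemma Ptag_index_eq_if_Ptag_eq: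
  assumes "1 \<le> \<alpha>" "1 \<le> \<beta>" "Ptag \<beta> = Ptag \<alpha>" "1 \<le> k"
  shows "Ptag_index \<beta> k = Ptag_index \<alpha> k"
proof -
  have "Ptag \<alpha> (Ptag_index \<beta> k) = Ptag \<alpha> (Ptag_index \<alpha> k)"
    using Ptag_Suc[OF assms(1,4)] Ptag_Suc[OF assms(2,4)] assms(3) by simp
  then show ?thesis
    using strict_mono_Ptag[OF assms(1)] by (simp add: strict_mono_eq)
qed

lemma Ptag_eq_iff_brackets:
  assumes "1 \<le> \<alpha>" "1 \<le> \<beta>"
  shows "Ptag \<beta> = Ptag \<alpha> \<longleftrightarrow> (\<forall>k\<ge>1.
           \<beta> * real (Ptag \<alpha> (Ptag_index \<alpha> k - 1)) < real (Ptag \<alpha> k) \<and>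
           real (Ptag \<alpha> k) \<le> \<beta> * real (Ptag \<alpha> (Ptag_index \<alpha> k)))"
    (is "_ \<longleftrightarrow> (\<forall>k\<ge>1. ?bracket k)")
proof
  assume eq: "Ptag \<beta> = Ptag \<alpha>"
  show "\<forall>k\<ge>1. ?bracket k"
    using Ptag_index(3,4)[OF assms(2)] Ptag_index_eq_if_Ptag_eq[OF assms eq] eq by simp
next
  assume brackets: "\<forall>k\<ge>1. ?bracket k"
  have "Ptag \<beta> n = Ptag \<alpha> n" for n
  proof (induction n rule: less_induct)
    case (less n)
    show ?case
    proof (cases "n \<le> 1")
      case True
      then show ?thesis by (cases n) auto
    next
      case False
      then obtain k where n: "n = Suc k" and k: "1 \<le> k"
        by (cases n) auto
      let ?j = "Ptag_index \<alpha> k"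
      have "?j \<le> k" "1 \<le> ?j"
        using Ptag_index(1,2)[OF assms(1) k] by auto
      then have same: "Ptag \<beta> i = Ptag \<alpha> i" if "i \<in> {k, ?j, ?j - 1}" for i
        using that less.IH n by auto
      have "Ptag_index \<beta> k = ?j"
        using Ptag_index_unique[OF assms(2) k \<open>1 \<le> ?j\<close> \<open>?j \<le> k\<close>] brackets k same by simp
      then show ?thesis
        using Ptag_Suc[OF assms(1) k] Ptag_Suc[OF assms(2) k] same n by simp
    qed
  qed
  then show "Ptag \<beta> = Ptag \<alpha>" ..
qed

lemma Ptag_index_Suc_le:
  assumes "1 \<le> \<alpha>" "1 \<le> k"
  shows "Ptag_index \<alpha> (Suc k) \<le> Suc (Ptag_index \<alpha> k)"
proof (rule ccontr)
  let ?P = "\<lambda>i. real (Ptag \<alpha> i)" and ?J = "Ptag_index \<alpha>"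
  assume "\<not> ?thesis"
  then have "?P (Suc (?J k)) \<le> ?P (?J (Suc k) - 1)"
    using monoD[OF mono_Ptag[of \<alpha>], of "Suc (?J k)" "?J (Suc k) - 1"] by simp
  have J: "1 \<le> ?J k"
    using Ptag_index(1)[OF assms] .
  have "?P (Suc k) \<le> \<alpha> * ?P (?J k) + ?P (?J k)"
    using Ptag_Suc[OF assms] Ptag_index(4)[OF assms] by simp
  also have "\<dots> \<le> \<alpha> * ?P (Suc (?J k))"
    using Ptag_Suc[OF assms(1) J] Ptag_index(4)[OF assms(1) J] by (simp add: distrib_left)
  also have "\<dots> \<le> \<alpha> * ?P (?J (Suc k) - 1)"
    using \<open>?P (Suc (?J k)) \<le> ?P (?J (Suc k) - 1)\<close> assms(1) by (simp add: mult_left_mono)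
  also have "\<dots> < ?P (Suc k)"
    using Ptag_index(3)[OF assms(1), of "Suc k"] by simp
  finally show False by simp
qed

lemma incseq_Ptag_lag:
  assumes "1 \<le> \<alpha>"
  shows "incseq (\<lambda>k. k - Ptag_index \<alpha> k)"
proof (rule incseq_SucI)
  fix k
  show "k - Ptag_index \<alpha> k \<le> Suc k - Ptag_index \<alpha> (Suc k)"
  proof (cases "k = 0")
    case False
    then have k: "1 \<le> k" by simp
    show ?thesis
      using diff_le_mono2[OF Ptag_index_Suc_le[OF assms k], of "Suc k"] by simp
  qed simp
qed

lemma Ptag_Suc_ge:
  assumes "1 \<le> \<alpha>" "1 \<le> k"
  shows "(\<alpha> + 1) * real (Ptag \<alpha> k) \<le> \<alpha> * real (Ptag \<alpha> (Suc k))"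
  using Ptag_Suc[OF assms] Ptag_index(4)[OF assms] by (simp add: algebra_simps)

lemma Ptag_growth:
  assumes "1 \<le> \<alpha>" "1 \<le> j"
  shows "(\<alpha> + 1) ^ n * real (Ptag \<alpha> j) \<le> \<alpha> ^ n * real (Ptag \<alpha> (j + n))"
proof (induction n)
  case (Suc n)
  have "(\<alpha> + 1) ^ Suc n * real (Ptag \<alpha> j) \<le> (\<alpha> + 1) * (\<alpha> ^ n * real (Ptag \<alpha> (j + n)))"
    using Suc.IH assms(1) by (simp add: mult_left_mono)
  also have "\<dots> \<le> \<alpha> ^ n * (\<alpha> * real (Ptag \<alpha> (Suc (j + n))))"
    using Ptag_Suc_ge[OF assms(1), of "j + n"] assms by (simp add: mult.left_commute mult_left_mono)
  finally show ?case by (simp add: mult_ac)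
qed simp

lemma Ptag_lag_le:
  assumes "1 \<le> \<alpha>" "1 \<le> k"
  shows "real (k - Ptag_index \<alpha> k) \<le> \<alpha> * \<alpha>"
proof -
  let ?j = "Ptag_index \<alpha> k"
  let ?n = "k - ?j"
  have "1 \<le> ?j" "?j + ?n = k"
    using Ptag_index(1,2)[OF assms] by auto
  have "(\<alpha> + 1) ^ ?n * real (Ptag \<alpha> ?j) \<le> \<alpha> ^ ?n * real (Ptag \<alpha> k)"
    using Ptag_growth[OF assms(1) \<open>1 \<le> ?j\<close>, of ?n] \<open>?j + ?n = k\<close> by simp
  also have "\<dots> \<le> \<alpha> ^ ?n * (\<alpha> * real (Ptag \<alpha> ?j))"
    using Ptag_index(4)[OF assms] assms(1) by (simp add: mult_left_mono)
  finally have "(\<alpha> + 1) ^ ?n \<le> \<alpha> ^ ?n * \<alpha>"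
    using Ptag_pos[OF \<open>1 \<le> ?j\<close>, of \<alpha>] by (simp add: mult.assoc)
  moreover have "(1 + 1 / \<alpha>) ^ ?n = (\<alpha> + 1) ^ ?n / \<alpha> ^ ?n"
    using assms(1) by (simp add: field_simps power_divide)
  ultimately have "(1 + 1 / \<alpha>) ^ ?n \<le> \<alpha>"
    using assms(1) by (simp add: divide_le_eq mult.commute)
  moreover have "1 + real ?n * (1 / \<alpha>) \<le> (1 + 1 / \<alpha>) ^ ?n"
    using assms(1) by (intro Bernoulli_inequality) (simp add: order_trans[of _ 0])
  ultimately have "real ?n / \<alpha> \<le> \<alpha>"
    by simp
  then show ?thesis
    using assms(1) by (simp add: divide_le_eq)
qed

lemma incseq_bounded_eventually_const:
  fixes d :: "nat \<Rightarrow> nat"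
  assumes "incseq d" "\<And>k. d k \<le> B"
  shows "\<exists>K. \<forall>k\<ge>K. d k = d K"
proof -
  have fin: "finite (range d)"
    using assms(2) by (auto intro: finite_subset[of _ "{..B}"])
  then have "Max (range d) \<in> range d"
    by (intro Max_in) auto
  then obtain K where K: "Max (range d) = d K"
    by blast
  have "d k = d K" if "K \<le> k" for k
    using Max_ge[OF fin rangeI[of d k]] monoD[OF assms(1) that] K by linarith
  then show ?thesis by blast
qed

lemma linear_recurrence_lower_bound:
  fixes P F :: "nat \<Rightarrow> real"
  assumes "\<And>k. N \<le> k \<Longrightarrow> P (Suc k) = P k + P (k - m)"
    and "\<And>k. N \<le> k \<Longrightarrow> F (Suc k) = F k + F (k - m)"
    and "\<And>k. a \<le> k \<Longrightarrow> k \<le> N \<Longrightarrow> c * P k \<le> F k"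
    and "a + m \<le> N" "a \<le> k"
  shows "c * P k \<le> F k"
  using assms(5)
proof (induction k rule: less_induct)
  case (less k)
  show ?case
  proof (cases "k \<le> N")
    case True
    then show ?thesis using assms(3) less.prems by simp
  next
    case False
    then obtain i where "k = Suc i" "N \<le> i"
      by (cases k) auto
    then have "c * P i \<le> F i" "c * P (i - m) \<le> F (i - m)"
      using less.IH assms(4) by auto
    then show ?thesis
      using assms(1,2) \<open>k = Suc i\<close> \<open>N \<le> i\<close> by (simp add: distrib_left)
  qed
qed

lemma Ptag_index_eventually_lag:
  assumes "1 \<le> \<alpha>"
  obtains K m where "1 \<le> K" "\<And>k. K \<le> k \<Longrightarrow> Ptag_index \<alpha> k = k - m"
proof -
  have "k - Ptag_index \<alpha> k \<le> nat \<lceil>\<alpha> * \<alpha>\<rceil>" for k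
  proof (cases "k = 0")
    case False
    then show ?thesis
      using Ptag_lag_le[OF assms, of k] by linarith
  qed simp
  then obtain K where lag: "\<And>k. K \<le> k \<Longrightarrow> k - Ptag_index \<alpha> k = K - Ptag_index \<alpha> K"
    using incseq_bounded_eventually_const[OF incseq_Ptag_lag[OF assms]] by blast
  have "Ptag_index \<alpha> k = k - (K - Ptag_index \<alpha> K)" if "Suc K \<le> k" for k
    using lag[of k] Ptag_index(2)[OF assms, of k] that by simp
  then show ?thesis
    using that[of "Suc K"] by simp
qed

definition Ptag_slack :: "real \<Rightarrow> nat \<Rightarrow> real" where
  "Ptag_slack \<alpha> k = real (Ptag \<alpha> k) - \<alpha> * real (Ptag \<alpha> (Ptag_index \<alpha> k - 1))"

lemma Ptag_slack_pos: "1 \<le> \<alpha> \<Longrightarrow> 1 \<le> k \<Longrightarrow> 0 < Ptag_slack \<alpha> k"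
  using Ptag_index(3) by (simp add: Ptag_slack_def)

lemma Ptag_slack_Suc:
  assumes "1 \<le> \<alpha>" "1 \<le> K" and lag: "\<And>k. K \<le> k \<Longrightarrow> Ptag_index \<alpha> k = k - m"
    and "K + m + 1 \<le> k"
  shows "Ptag_slack \<alpha> (Suc k) = Ptag_slack \<alpha> k + Ptag_slack \<alpha> (k - m)"
proof -
  let ?P = "\<lambda>i. real (Ptag \<alpha> i)"
  have P_rec: "?P (Suc i) = ?P i + ?P (i - m)" if "K \<le> i" for i
    using Ptag_Suc[OF assms(1), of i] lag[OF that] that assms(2) by simp
  have "Ptag_index \<alpha> (Suc k) - 1 = k - m" "Ptag_index \<alpha> k - 1 = k - m - 1"
    and "Ptag_index \<alpha> (k - m) - 1 = k - m - 1 - m"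
    using lag assms(4) by auto
  moreover have "?P (k - m) = ?P (k - m - 1) + ?P (k - m - 1 - m)"
    using P_rec[of "k - m - 1"] assms(4) by (simp add: Suc_diff_Suc)
  ultimately show ?thesis
    using P_rec[of k] assms(4) by (simp add: Ptag_slack_def algebra_simps)
qed

lemma Ptag_gap:
  assumes "1 \<le> \<alpha>"
  shows "\<exists>\<delta>>0. \<forall>k\<ge>1. (\<alpha> + \<delta>) * real (Ptag \<alpha> (Ptag_index \<alpha> k - 1)) \<le> real (Ptag \<alpha> k)"
proof -
  let ?P = "\<lambda>i. real (Ptag \<alpha> i)" and ?F = "Ptag_slack \<alpha>"
  obtain K m where "1 \<le> K" and lag: "\<And>k. K \<le> k \<Longrightarrow> Ptag_index \<alpha> k = k - m"
    using Ptag_index_eventually_lag[OF assms] by blast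
  define N where "N = K + m + 1"
  define c where "c = Min ((\<lambda>k. ?F k / ?P k) ` {1..N})"
  have "0 < c"
    using Ptag_slack_pos[OF assms] Ptag_pos by (simp add: c_def N_def Min_gr_iff)
  have bound: "c * ?P k \<le> ?F k" if "1 \<le> k" for k
  proof (rule linear_recurrence_lower_bound[of N ?P m ?F 1 c])
    show "?P (Suc k) = ?P k + ?P (k - m)" if "N \<le> k" for k
      using Ptag_Suc[OF assms, of k] lag[of k] that \<open>1 \<le> K\<close> by (simp add: N_def)
    show "?F (Suc k) = ?F k + ?F (k - m)" if "N \<le> k" for k
      using Ptag_slack_Suc[OF assms \<open>1 \<le> K\<close> lag] that by (simp add: N_def)
    show "c * ?P k \<le> ?F k" if "1 \<le> k" "k \<le> N" for k
      using Min_le[of "(\<lambda>k. ?F k / ?P k) ` {1..N}" "?F k / ?P k"] Ptag_pos[of k \<alpha>] that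
      by (simp add: c_def pos_le_divide_eq)
  qed (use that in \<open>simp_all add: N_def\<close>)
  have "(\<alpha> + c) * ?P (Ptag_index \<alpha> k - 1) \<le> ?P k" if "1 \<le> k" for k
  proof -
    have "?P (Ptag_index \<alpha> k - 1) \<le> ?P k"
      using monoD[OF mono_Ptag[of \<alpha>], of "Ptag_index \<alpha> k - 1" k] Ptag_index(2)[OF assms that]
      by simp
    then have "c * ?P (Ptag_index \<alpha> k - 1) \<le> c * ?P k"
      using \<open>0 < c\<close> by (intro mult_left_mono) simp_all
    then show ?thesis
      using bound[OF that] by (simp add: Ptag_slack_def distrib_right)
  qed
  then show ?thesis
    using \<open>0 < c\<close> by blast
qed

lemma ex_Ptag_index_ge_2:
  assumes "1 \<le> \<alpha>"
  shows "\<exists>k\<ge>1. 2 \<le> Ptag_index \<alpha> k"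
proof -
  define k where "k = nat \<lceil>\<alpha> * \<alpha>\<rceil> + 2"
  have "1 \<le> k" by (simp add: k_def)
  then have "real (k - Ptag_index \<alpha> k) \<le> \<alpha> * \<alpha>" "Ptag_index \<alpha> k \<le> k"
    using Ptag_lag_le[OF assms] Ptag_index(2)[OF assms] by auto
  then have "2 \<le> Ptag_index \<alpha> k"
    unfolding k_def by linarith
  with \<open>1 \<le> k\<close> show ?thesis by blast
qed

(* The endpoints alpha_0 and alpha_1 of I_alpha.  Indices with j(k) = 1 are left out of the
   infimum: P_0 = 0 puts no upper constraint on beta. *)
definition Ptag_lower :: "real \<Rightarrow> real" where
  "Ptag_lower \<alpha> = (SUP k\<in>{1..}. real (Ptag \<alpha> k) / real (Ptag \<alpha> (Ptag_index \<alpha> k)))"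

definition Ptag_upper :: "real \<Rightarrow> real" where
  "Ptag_upper \<alpha> = (INF k\<in>{k. 1 \<le> k \<and> 2 \<le> Ptag_index \<alpha> k}.
     real (Ptag \<alpha> k) / real (Ptag \<alpha> (Ptag_index \<alpha> k - 1)))"

lemma bdd_above_Ptag_lower_ratios:
  assumes "1 \<le> \<alpha>"
  shows "bdd_above ((\<lambda>k. real (Ptag \<alpha> k) / real (Ptag \<alpha> (Ptag_index \<alpha> k))) ` {1..})"
proof (rule bdd_aboveI2)
  fix k :: nat
  assume "k \<in> {1..}"
  then show "real (Ptag \<alpha> k) / real (Ptag \<alpha> (Ptag_index \<alpha> k)) \<le> \<alpha>"
    using Ptag_index(1,4)[OF assms] Ptag_pos by (simp add: pos_divide_le_eq)
qed

lemma one_le_Ptag_lower: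
  assumes "1 \<le> \<alpha>"
  shows "1 \<le> Ptag_lower \<alpha>"
proof -
  have "Ptag_index \<alpha> 1 = 1"
    using Ptag_index(1,2)[OF assms, of 1] by simp
  then show ?thesis
    unfolding Ptag_lower_def
    by (intro cSUP_upper2[OF bdd_above_Ptag_lower_ratios[OF assms], of 1]) simp_all
qed

lemma Ptag_interval_if_Ptag_eq:
  assumes "1 \<le> \<alpha>" "1 \<le> \<beta>" and eq: "Ptag \<beta> = Ptag \<alpha>"
  shows "\<beta> \<in> {Ptag_lower \<alpha>..<Ptag_upper \<alpha>}"
proof -
  have "Ptag_lower \<alpha> \<le> \<beta>"
    unfolding Ptag_lower_def
  proof (rule cSUP_least)
    fix k :: nat
    assume "k \<in> {1..}"
    then show "real (Ptag \<alpha> k) / real (Ptag \<alpha> (Ptag_index \<alpha> k)) \<le> \<beta>"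
      using Ptag_eq_iff_brackets[OF assms(1,2)] eq Ptag_index(1)[OF assms(1)] Ptag_pos
      by (simp add: pos_divide_le_eq)
  qed simp
  obtain \<delta> where "0 < \<delta>"
    and gap: "\<And>k. 1 \<le> k \<Longrightarrow> (\<beta> + \<delta>) * real (Ptag \<alpha> (Ptag_index \<alpha> k - 1)) \<le> real (Ptag \<alpha> k)"
    using Ptag_gap[OF assms(2)] Ptag_index_eq_if_Ptag_eq[OF assms] eq by auto
  have "\<beta> + \<delta> \<le> Ptag_upper \<alpha>"
    unfolding Ptag_upper_def
  proof (rule cINF_greatest)
    show "{k. 1 \<le> k \<and> 2 \<le> Ptag_index \<alpha> k} \<noteq> {}"
      using ex_Ptag_index_ge_2[OF assms(1)] by blast
  next
    fix k
    assume "k \<in> {k. 1 \<le> k \<and> 2 \<le> Ptag_index \<alpha> k}"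
    then have k: "1 \<le> k" "1 \<le> Ptag_index \<alpha> k - 1"
      by auto
    then show "\<beta> + \<delta> \<le> real (Ptag \<alpha> k) / real (Ptag \<alpha> (Ptag_index \<alpha> k - 1))"
      using gap[OF k(1)] Ptag_pos[OF k(2), of \<alpha>] by (simp add: pos_le_divide_eq)
  qed
  with \<open>Ptag_lower \<alpha> \<le> \<beta>\<close> \<open>0 < \<delta>\<close> show ?thesis
    by simp
qed

lemma Ptag_eq_if_interval:
  assumes "1 \<le> \<alpha>" and \<beta>: "\<beta> \<in> {Ptag_lower \<alpha>..<Ptag_upper \<alpha>}"
  shows "Ptag \<beta> = Ptag \<alpha>"
proof -
  have "\<beta> * real (Ptag \<alpha> (Ptag_index \<alpha> k - 1)) < real (Ptag \<alpha> k) \<and>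
        real (Ptag \<alpha> k) \<le> \<beta> * real (Ptag \<alpha> (Ptag_index \<alpha> k))" if "1 \<le> k" for k
  proof
    have "real (Ptag \<alpha> k) / real (Ptag \<alpha> (Ptag_index \<alpha> k)) \<le> Ptag_lower \<alpha>"
      unfolding Ptag_lower_def using that
      by (intro cSUP_upper[OF _ bdd_above_Ptag_lower_ratios[OF assms(1)]]) simp
    then have "real (Ptag \<alpha> k) / real (Ptag \<alpha> (Ptag_index \<alpha> k)) \<le> \<beta>"
      using \<beta> by simp
    then show "real (Ptag \<alpha> k) \<le> \<beta> * real (Ptag \<alpha> (Ptag_index \<alpha> k))"
      using Ptag_pos[OF Ptag_index(1)[OF assms(1) that], of \<alpha>] by (simp add: pos_divide_le_eq)
    show "\<beta> * real (Ptag \<alpha> (Ptag_index \<alpha> k - 1)) < real (Ptag \<alpha> k)"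
    proof (cases "2 \<le> Ptag_index \<alpha> k")
      case True
      have "Ptag_upper \<alpha> \<le> real (Ptag \<alpha> k) / real (Ptag \<alpha> (Ptag_index \<alpha> k - 1))"
        unfolding Ptag_upper_def using that True
        by (intro cINF_lower bdd_belowI2[of _ 0]) simp_all
      then have "\<beta> < real (Ptag \<alpha> k) / real (Ptag \<alpha> (Ptag_index \<alpha> k - 1))"
        using \<beta> by simp
      moreover have "1 \<le> Ptag_index \<alpha> k - 1"
        using True by simp
      ultimately show ?thesis
        using Ptag_pos[of "Ptag_index \<alpha> k - 1" \<alpha>] by (simp add: pos_less_divide_eq)
    next
      case False
      then have "Ptag_index \<alpha> k - 1 = 0"
        by simp
      then show ?thesis
        using Ptag_pos[OF that] by simp
    qed
  qed
  moreover have "1 \<le> \<beta>"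
    using one_le_Ptag_lower[OF assms(1)] \<beta> by simp
  ultimately show ?thesis
    using Ptag_eq_iff_brackets[OF assms(1)] by blast
qed

theorem mainTheorem1:
  fixes \<alpha> :: real
  assumes "\<alpha> \<ge> 1"
  shows "\<exists>\<alpha>0 \<alpha>1. \<alpha>0 \<le> \<alpha> \<and> \<alpha> < \<alpha>1 \<and>
           (\<forall>\<beta>\<in>{\<alpha>0..<\<alpha>1}. Ptag \<beta> = Ptag \<alpha>) \<and>
           (\<forall>\<beta>. \<beta> \<ge> 1 \<and> \<beta> \<notin> {\<alpha>0..<\<alpha>1} \<longrightarrow> (\<exists>i. Ptag \<alpha> i \<noteq> Ptag \<beta> i))"
proof (intro exI conjI)
  let ?I = "{Ptag_lower \<alpha>..<Ptag_upper \<alpha>}"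
  have "\<alpha> \<in> ?I"
    using Ptag_interval_if_Ptag_eq[OF assms assms refl] .
  then show "Ptag_lower \<alpha> \<le> \<alpha>" "\<alpha> < Ptag_upper \<alpha>"
    by simp_all
  show "\<forall>\<beta>\<in>?I. Ptag \<beta> = Ptag \<alpha>"
    using Ptag_eq_if_interval[OF assms] by blast
  show "\<forall>\<beta>. \<beta> \<ge> 1 \<and> \<beta> \<notin> ?I \<longrightarrow> (\<exists>i. Ptag \<alpha> i \<noteq> Ptag \<beta> i)"
    using Ptag_interval_if_Ptag_eq[OF assms] by (metis ext)
qed

end
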